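(* For every $n\in\mathbb N$, let $z_n$ be the solution of $z_n'(t)=-n^2\int_0^tN(t-s)z_n(s)\,ds$, $z_n(0)=1$. Then $|z_n(t)|\le 1$ for every $n\in\mathbb N$ and every $t>0$.
   Context: $N:(0,+\infty)\to\mathbb R$ satisfies $N\in L^1(0,T)$ for every $T>0$, and its Laplace transform $\hat N(\lambda)$ is defined and holomorphic on $\Pi_0=\{\operatorname{Re}\lambda>0\}$ and maps $\Pi_0$ into itself (positive real function). *)

theory Defs
  imports "HOL-Analysis.Analysis"
begin

definition laplace :: "(real \<Rightarrow> real) \<Rightarrow> complex \<Rightarrow> complex" where
  "laplace N z = integral {0<..} (\<lambda>t. exp (- z * complex_of_real t) * complex_of_real (N t))"

end

theory Submission
  imports Defs
begin

text \<open>Along a solution, \<open>(y\<^sup>2)' = -2n\<^sup>2 y (N \<star> y)\<close> with \<open>(N \<star> y)(t) = \<integral>\<^sub>0\<^sup>t N(x) y(t - x) dx\<close>,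
  so \<open>y(T)\<^sup>2 - 1 = -2n\<^sup>2 \<integral>\<^sub>0\<^sup>T y (N \<star> y)\<close> and it suffices that \<open>N\<close> is of positive type:
  \<open>\<integral>\<^sub>0\<^sup>T y (N \<star> y) \<ge> 0\<close> for every continuous \<open>y\<close>. For the damped kernel \<open>M(x) = e\<^sup>-\<^sup>\<sigma>\<^sup>x N(x)\<close>,
  which is integrable with cosine transform \<open>Re N\<^sup>^(\<sigma> + i\<theta>) > 0\<close>, test against \<open>f\<close>: the form
  \<open>\<integral>\<^sub>0\<^sup>T \<integral>\<^sub>0\<^sup>\<infinity> \<integral>\<^sub>0\<^sup>T y(t) M(x) y(s) f(t - x - s) ds dx dt\<close> equals the cosine transform of \<open>M\<close> at \<open>\<theta>\<close>
  times \<open>|\<integral>\<^sub>0\<^sup>T y(s) e\<^sup>i\<^sup>\<theta>\<^sup>s ds|\<^sup>2\<close> when \<open>f = cos (\<theta> \<cdot>)\<close>, hence is nonnegative for every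
  nonnegative combination of cosines, in particular for the normalised \<open>P\<close>-periodic kernels
  \<open>cos\<^sup>2\<^sup>L(\<pi> v / P)\<close>. These form an approximate identity, so letting \<open>L \<rightarrow> \<infinity>\<close> replaces \<open>f\<close> by
  the periodised \<open>y\<close>; letting \<open>P \<rightarrow> \<infinity>\<close> and then \<open>\<sigma> \<rightarrow> 0\<close> (dominated convergence each time)
  yields positivity for \<open>N\<close> itself.\<close>

lemma negligible_countable: "countable (A :: real set) \<Longrightarrow> negligible A"
  using negligible_countable_Union[of "(\<lambda>x. {x}) ` A"] by auto

lemma integral_reflect_shift_real:
  fixes g :: "real \<Rightarrow> real"
  shows "integral {0..T} (\<lambda>s. g (w - s)) = integral {w - T..w} g"
proof -
  have "integral {0..T} (\<lambda>s. g (w - s)) = integral {- 0..- (-T)} (\<lambda>s. (\<lambda>x. g (w + x)) (- s))"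
    by simp
  also have "\<dots> = integral {-T..0} (\<lambda>x. g (w + x))"
    using Henstock_Kurzweil_Integration.integral_reflect_real[of 0 "-T" "\<lambda>x. g (w + x)"] by simp
  also have "\<dots> = integral {-T+w..0+w} g"
    using integral_shift_Icc_real[of "-T" 0 g w] by (simp add: o_def)
  finally show ?thesis by simp
qed

lemma absolutely_integrable_bounded_continuous_product:
  fixes N f :: "real \<Rightarrow> real"
  assumes "N absolutely_integrable_on S" "S \<in> sets lebesgue" "continuous_on S f"
    and "\<And>x. x \<in> S \<Longrightarrow> \<bar>f x\<bar> \<le> C"
  shows "(\<lambda>x. f x * N x) absolutely_integrable_on S"
proof (rule absolutely_integrable_bounded_measurable_product_real)
  show "f \<in> borel_measurable (lebesgue_on S)"
    using assms by (intro continuous_imp_measurable_on_sets_lebesgue)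
  show "bounded (f ` S)" using assms(4) by (intro boundedI) auto
qed (use assms in auto)

lemma integral_nonneg_limit:
  fixes f :: "nat \<Rightarrow> real \<Rightarrow> real"
  assumes "\<And>k. f k integrable_on S" "h integrable_on S"
    and "\<And>k x. x \<in> S \<Longrightarrow> norm (f k x) \<le> h x" "\<And>x. x \<in> S \<Longrightarrow> (\<lambda>k. f k x) \<longlonglongrightarrow> g x"
    and "\<And>k. integral S (f k) \<ge> 0"
  shows "g integrable_on S" "integral S g \<ge> 0"
proof -
  note limit = dominated_convergence[OF assms(1-4)]
  show "g integrable_on S" by (rule limit(1))
  show "integral S g \<ge> 0" using limit(2) assms(5) by (intro LIMSEQ_le_const[of _ _ 0]) auto
qed

lemma cos_sq_add_int_pi: "cos (x + of_int k * pi) ^ 2 = cos x ^ 2"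
proof -
  have s: "sin (of_int k * pi) = 0" using sin_zero_iff_int2 by blast
  have c: "cos (of_int k * pi) ^ 2 = 1" using sin_cos_squared_add[of "of_int k * pi"] s by simp
  show ?thesis by (simp add: cos_add s power_mult_distrib c)
qed

lemma cos_sq_antimono:
  assumes "0 \<le> a" "a \<le> b" "b \<le> pi/2"
  shows "cos b ^ 2 \<le> cos a ^ 2"
proof -
  have "cos b \<le> cos a" using assms by (intro cos_monotone_0_pi_le) auto
  moreover have "0 \<le> cos b" using assms by (intro cos_ge_zero) auto
  ultimately show ?thesis by (intro power_mono) auto
qed

lemma continuous_on_reflect_shift:
  "continuous_on UNIV (h :: real \<Rightarrow> real) \<Longrightarrow> continuous_on UNIV (\<lambda>x. h (a - x))"
  using continuous_on_compose2[of UNIV h UNIV "\<lambda>x. a - x"] continuous_on_diff[OF continuous_on_const continuous_on_id]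
  by auto

lemma bounded_range_reflect_shift:
  "bounded (range (h :: real \<Rightarrow> real)) \<Longrightarrow> bounded (range (\<lambda>x. h (a - x)))"
  by (rule bounded_subset) auto

lemma bounded_range_cmult:
  assumes "bounded (range (h :: real \<Rightarrow> real))"
  shows "bounded (range (\<lambda>x. c * h x))"
proof -
  obtain B where "\<And>x. \<bar>h x\<bar> \<le> B" using assms by (auto simp: bounded_iff)
  then have "\<And>x. \<bar>c * h x\<bar> \<le> \<bar>c\<bar> * B" by (simp add: abs_mult mult_left_mono)
  then show ?thesis by (intro boundedI) auto
qed

lemma bounded_range_cos: "bounded (range (\<lambda>x. cos (a * x) :: real))"
  by (rule boundedI[of _ 1]) auto

lemma bounded_range_sin: "bounded (range (\<lambda>x. sin (a * x) :: real))"
  by (rule boundedI[of _ 1]) auto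

section \<open>Cosine test functions\<close>

inductive cos_cone :: "(real \<Rightarrow> real) \<Rightarrow> bool" where
  cos_cone_cos: "cos_cone (\<lambda>v. cos (\<theta> * v))"
| cos_cone_add: "cos_cone f \<Longrightarrow> cos_cone g \<Longrightarrow> cos_cone (\<lambda>v. f v + g v)"
| cos_cone_scale: "cos_cone f \<Longrightarrow> c \<ge> 0 \<Longrightarrow> cos_cone (\<lambda>v. c * f v)"

lemma cos_cone_mult_cos: "cos_cone g \<Longrightarrow> cos_cone (\<lambda>v. cos (\<theta> * v) * g v)"
proof (induction rule: cos_cone.induct)
  case (cos_cone_cos \<phi>)
  have "(\<lambda>v. cos (\<theta> * v) * cos (\<phi> * v)) =
      (\<lambda>v. (1/2) * cos ((\<theta> - \<phi>) * v) + (1/2) * cos ((\<theta> + \<phi>) * v))"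
    by (rule ext) (simp add: cos_times_cos left_diff_distrib distrib_right)
  moreover have "cos_cone (\<lambda>v. (1/2) * cos ((\<theta> - \<phi>) * v) + (1/2) * cos ((\<theta> + \<phi>) * v))"
    by (intro cos_cone.intros) auto
  ultimately show ?case by simp
next
  case (cos_cone_add f g)
  then show ?case using cos_cone.cos_cone_add[OF cos_cone_add.IH] by (simp add: distrib_left)
next
  case (cos_cone_scale f c)
  then show ?case
    using cos_cone.cos_cone_scale[OF cos_cone_scale.IH cos_cone_scale.hyps(2)] by (simp add: algebra_simps)
qed

lemma cos_cone_cos_even_power: "cos_cone (\<lambda>v. cos (a * v) ^ (2 * L))"
proof (induction L)
  case 0
  then show ?case using cos_cone_cos[of 0] by simp
next
  case (Suc L)
  have "(\<lambda>v. cos (a * v) ^ (2 * Suc L)) = (\<lambda>v. cos (a * v) * (cos (a * v) * cos (a * v) ^ (2 * L)))"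
    by (rule ext) (simp add: power_add)
  then show ?case using cos_cone_mult_cos[OF cos_cone_mult_cos[OF Suc.IH]] by simp
qed

section \<open>Kernels with nonnegative cosine transform\<close>

locale positive_cos_kernel =
  fixes T :: real and y :: "real \<Rightarrow> real" and M :: "real \<Rightarrow> real"
  assumes T_pos: "T > 0" and y_cont: "continuous_on {0..T} y"
    and M_abs_int: "M absolutely_integrable_on {0<..}"
    and M_cos_nonneg: "\<And>\<theta>. integral {0<..} (\<lambda>x. M x * cos (\<theta> * x)) \<ge> 0"
begin

definition "ymax = Sup ((\<lambda>s. \<bar>y s\<bar>) ` {0..T})"
definition "Mnorm = integral {0<..} (\<lambda>x. \<bar>M x\<bar>)"
definition "Mtail a = integral {0<..} (\<lambda>x. if x \<in> {a..} then \<bar>M x\<bar> else 0)"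

definition "yconv f u = integral {0..T} (\<lambda>s. y s * f (u - s))"
definition "kconv f t = integral {0<..} (\<lambda>x. M x * yconv f (t - x))"
definition "form f = integral {0..T} (\<lambda>t. y t * kconv f t)"
definition "admissible f \<longleftrightarrow> continuous_on UNIV f \<and> bounded (range f)
   \<and> continuous_on UNIV (yconv f) \<and> bounded (range (yconv f)) \<and> continuous_on UNIV (kconv f)
   \<and> form f \<ge> 0"

definition "ycos \<theta> = integral {0..T} (\<lambda>s. y s * cos (\<theta> * s))"
definition "ysin \<theta> = integral {0..T} (\<lambda>s. y s * sin (\<theta> * s))"
definition "Mcos \<theta> = integral {0<..} (\<lambda>x. M x * cos (\<theta> * x))"
definition "Msin \<theta> = integral {0<..} (\<lambda>x. M x * sin (\<theta> * x))"

lemma M_mult_integrable: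
  assumes "continuous_on UNIV g" "bounded (range g)"
  shows "(\<lambda>x. M x * g x) integrable_on {0<..}"
proof -
  have "(\<lambda>x. g x * M x) absolutely_integrable_on {0<..}"
    using assms M_abs_int
    by (intro absolutely_integrable_bounded_measurable_product_real)
       (auto intro!: continuous_imp_measurable_on_sets_lebesgue intro: continuous_on_subset
          bounded_subset[OF assms(2)])
  then show ?thesis by (simp add: mult.commute absolutely_integrable_on_def)
qed

lemma abs_M_integrable_on:
  "S \<in> sets lebesgue \<Longrightarrow> S \<subseteq> {0<..} \<Longrightarrow> (\<lambda>x. \<bar>M x\<bar>) integrable_on S"
  using set_integrable_subset[OF M_abs_int] unfolding absolutely_integrable_on_def by auto

lemma abs_M_integrable: "(\<lambda>x. \<bar>M x\<bar>) integrable_on {0<..}"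
  by (rule abs_M_integrable_on) auto

lemma M_integral_bound:
  assumes "(\<lambda>x. M x * g x) integrable_on {0<..}" "\<And>x. \<bar>g x\<bar> \<le> B"
  shows "\<bar>integral {0<..} (\<lambda>x. M x * g x)\<bar> \<le> B * Mnorm"
proof -
  have "norm (integral {0<..} (\<lambda>x. M x * g x)) \<le> integral {0<..} (\<lambda>x. B * \<bar>M x\<bar>)"
  proof (rule integral_norm_bound_integral)
    show "(\<lambda>x. B * \<bar>M x\<bar>) integrable_on {0<..}"
      by (intro integrable_on_mult_right abs_M_integrable)
    fix x
    have "\<bar>M x\<bar> * \<bar>g x\<bar> \<le> \<bar>M x\<bar> * B" using assms(2) by (intro mult_left_mono) auto
    then show "norm (M x * g x) \<le> B * \<bar>M x\<bar>" by (simp add: abs_mult algebra_simps)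
  qed (rule assms(1))
  then show ?thesis unfolding Mnorm_def by simp
qed

lemma y_mult_integrable:
  assumes "continuous_on UNIV g"
  shows "(\<lambda>s. y s * g s) integrable_on {0..T}"
  by (rule integrable_continuous_interval)
     (intro continuous_intros y_cont continuous_on_subset[OF assms], auto)

lemma abs_y_le_ymax:
  assumes "s \<in> {0..T}"
  shows "\<bar>y s\<bar> \<le> ymax"
proof -
  have "compact ((\<lambda>s. \<bar>y s\<bar>) ` {0..T})"
    by (intro compact_continuous_image continuous_intros y_cont) auto
  then have "bdd_above ((\<lambda>s. \<bar>y s\<bar>) ` {0..T})"
    by (intro bounded_imp_bdd_above compact_imp_bounded)
  then show ?thesis unfolding ymax_def using assms by (intro cSup_upper) auto
qed

lemma ymax_nonneg: "ymax \<ge> 0"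
  using abs_y_le_ymax[of 0] T_pos by force

lemma yconv_cos: "yconv (\<lambda>v. cos (\<theta> * v)) u = cos (\<theta> * u) * ycos \<theta> + sin (\<theta> * u) * ysin \<theta>"
proof -
  have i1: "(\<lambda>s. y s * cos (\<theta> * s)) integrable_on {0..T}"
    by (rule y_mult_integrable) (intro continuous_intros)
  have i2: "(\<lambda>s. y s * sin (\<theta> * s)) integrable_on {0..T}"
    by (rule y_mult_integrable) (intro continuous_intros)
  have "(\<lambda>s. y s * cos (\<theta> * (u - s))) =
      (\<lambda>s. cos (\<theta> * u) * (y s * cos (\<theta> * s)) + sin (\<theta> * u) * (y s * sin (\<theta> * s)))"
    by (rule ext) (simp add: right_diff_distrib cos_diff algebra_simps)
  then show ?thesis
    unfolding yconv_def ycos_def ysin_def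
    using integrable_on_mult_right[OF i1] integrable_on_mult_right[OF i2] by (simp add: integral_add)
qed

lemma kconv_cos: "kconv (\<lambda>v. cos (\<theta> * v)) t =
   (ycos \<theta> * cos (\<theta> * t) + ysin \<theta> * sin (\<theta> * t)) * Mcos \<theta>
   + (ycos \<theta> * sin (\<theta> * t) - ysin \<theta> * cos (\<theta> * t)) * Msin \<theta>"
proof -
  have i1: "(\<lambda>x. M x * cos (\<theta> * x)) integrable_on {0<..}"
    by (rule M_mult_integrable) (intro continuous_intros bounded_range_cos)+
  have i2: "(\<lambda>x. M x * sin (\<theta> * x)) integrable_on {0<..}"
    by (rule M_mult_integrable) (intro continuous_intros bounded_range_sin)+
  have "(\<lambda>x. M x * yconv (\<lambda>v. cos (\<theta> * v)) (t - x)) =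
      (\<lambda>x. (ycos \<theta> * cos (\<theta> * t) + ysin \<theta> * sin (\<theta> * t)) * (M x * cos (\<theta> * x))
         + (ycos \<theta> * sin (\<theta> * t) - ysin \<theta> * cos (\<theta> * t)) * (M x * sin (\<theta> * x)))"
    unfolding yconv_cos by (rule ext) (simp add: right_diff_distrib cos_diff sin_diff algebra_simps)
  then show ?thesis
    unfolding kconv_def Mcos_def Msin_def
    using integrable_on_mult_right[OF i1] integrable_on_mult_right[OF i2] by (simp add: integral_add)
qed

lemma form_cos: "form (\<lambda>v. cos (\<theta> * v)) = Mcos \<theta> * ((ycos \<theta>)\<^sup>2 + (ysin \<theta>)\<^sup>2)"
proof -
  have i1: "(\<lambda>s. y s * cos (\<theta> * s)) integrable_on {0..T}"
    by (rule y_mult_integrable) (intro continuous_intros)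
  have i2: "(\<lambda>s. y s * sin (\<theta> * s)) integrable_on {0..T}"
    by (rule y_mult_integrable) (intro continuous_intros)
  have "(\<lambda>t. y t * kconv (\<lambda>v. cos (\<theta> * v)) t) =
      (\<lambda>t. (ycos \<theta> * Mcos \<theta> - ysin \<theta> * Msin \<theta>) * (y t * cos (\<theta> * t))
         + (ysin \<theta> * Mcos \<theta> + ycos \<theta> * Msin \<theta>) * (y t * sin (\<theta> * t)))"
    unfolding kconv_cos by (rule ext) (simp add: algebra_simps)
  then have "form (\<lambda>v. cos (\<theta> * v)) =
      (ycos \<theta> * Mcos \<theta> - ysin \<theta> * Msin \<theta>) * ycos \<theta> + (ysin \<theta> * Mcos \<theta> + ycos \<theta> * Msin \<theta>) * ysin \<theta>"
    unfolding form_def ycos_def ysin_def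
    using integrable_on_mult_right[OF i1] integrable_on_mult_right[OF i2] by (simp add: integral_add)
  then show ?thesis by (simp add: algebra_simps power2_eq_square)
qed

lemma admissible_cos: "admissible (\<lambda>v. cos (\<theta> * v))"
proof -
  have "yconv (\<lambda>v. cos (\<theta> * v)) = (\<lambda>u. cos (\<theta> * u) * ycos \<theta> + sin (\<theta> * u) * ysin \<theta>)"
    by (rule ext) (simp add: yconv_cos)
  moreover have "kconv (\<lambda>v. cos (\<theta> * v)) = (\<lambda>t.
      (ycos \<theta> * cos (\<theta> * t) + ysin \<theta> * sin (\<theta> * t)) * Mcos \<theta>
      + (ycos \<theta> * sin (\<theta> * t) - ysin \<theta> * cos (\<theta> * t)) * Msin \<theta>)"
    by (rule ext) (simp add: kconv_cos)
  moreover have "bounded (range (\<lambda>u. cos (\<theta> * u) * ycos \<theta> + sin (\<theta> * u) * ysin \<theta>))"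
  proof (rule boundedI[of _ "\<bar>ycos \<theta>\<bar> + \<bar>ysin \<theta>\<bar>"], clarsimp)
    fix u
    have "\<bar>cos (\<theta> * u) * ycos \<theta>\<bar> \<le> \<bar>ycos \<theta>\<bar>" "\<bar>sin (\<theta> * u) * ysin \<theta>\<bar> \<le> \<bar>ysin \<theta>\<bar>"
      by (auto simp: abs_mult intro!: mult_left_le_one_le)
    then show "\<bar>cos (\<theta> * u) * ycos \<theta> + sin (\<theta> * u) * ysin \<theta>\<bar> \<le> \<bar>ycos \<theta>\<bar> + \<bar>ysin \<theta>\<bar>"
      by linarith
  qed
  moreover have "form (\<lambda>v. cos (\<theta> * v)) \<ge> 0"
    using M_cos_nonneg[of \<theta>] by (simp add: form_cos Mcos_def)
  ultimately show ?thesis unfolding admissible_def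
    by (auto intro!: continuous_intros bounded_range_cos)
qed

lemma yconv_add:
  "continuous_on UNIV f \<Longrightarrow> continuous_on UNIV g \<Longrightarrow> yconv (\<lambda>v. f v + g v) u = yconv f u + yconv g u"
  unfolding yconv_def
  using y_mult_integrable[OF continuous_on_reflect_shift, of f u]
    y_mult_integrable[OF continuous_on_reflect_shift, of g u]
  by (simp add: distrib_left integral_add)

lemma yconv_scale: "yconv (\<lambda>v. c * f v) u = c * yconv f u"
  unfolding yconv_def by (simp add: algebra_simps)

lemma M_mult_yconv_integrable:
  "admissible f \<Longrightarrow> (\<lambda>x. M x * yconv f (t - x)) integrable_on {0<..}"
  unfolding admissible_def
  by (intro M_mult_integrable continuous_on_reflect_shift bounded_range_reflect_shift) auto

lemma kconv_add:
  assumes "admissible f" "admissible g"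
  shows "kconv (\<lambda>v. f v + g v) t = kconv f t + kconv g t"
  using assms M_mult_yconv_integrable[OF assms(1)] M_mult_yconv_integrable[OF assms(2)]
  unfolding kconv_def admissible_def by (simp add: yconv_add distrib_left integral_add)

lemma kconv_scale: "kconv (\<lambda>v. c * f v) t = c * kconv f t"
  unfolding kconv_def yconv_scale by (simp add: algebra_simps)

lemma admissible_add:
  assumes "admissible f" "admissible g"
  shows "admissible (\<lambda>v. f v + g v)"
proof -
  have cont: "continuous_on UNIV f" "continuous_on UNIV g"
    using assms by (auto simp: admissible_def)
  have yconv: "yconv (\<lambda>v. f v + g v) = (\<lambda>u. yconv f u + yconv g u)"
    by (rule ext) (simp add: yconv_add cont)
  have kconv: "kconv (\<lambda>v. f v + g v) = (\<lambda>u. kconv f u + kconv g u)"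
    by (rule ext) (simp add: kconv_add assms)
  have form: "form (\<lambda>v. f v + g v) = form f + form g"
    unfolding form_def kconv using assms y_mult_integrable[of "kconv f"] y_mult_integrable[of "kconv g"]
    by (simp add: admissible_def distrib_left integral_add)
  show ?thesis using assms unfolding admissible_def yconv kconv form
    by (auto intro!: continuous_intros bounded_plus_comp)
qed

lemma admissible_scale:
  assumes "admissible f" "c \<ge> 0"
  shows "admissible (\<lambda>v. c * f v)"
proof -
  have yconv: "yconv (\<lambda>v. c * f v) = (\<lambda>u. c * yconv f u)" by (rule ext) (simp add: yconv_scale)
  have kconv: "kconv (\<lambda>v. c * f v) = (\<lambda>u. c * kconv f u)" by (rule ext) (simp add: kconv_scale)
  have form: "form (\<lambda>v. c * f v) = c * form f"
    unfolding form_def kconv by (simp add: algebra_simps)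
  show ?thesis using assms unfolding admissible_def yconv kconv form
    by (auto intro!: continuous_intros bounded_range_cmult)
qed

lemma cos_cone_admissible: "cos_cone f \<Longrightarrow> admissible f"
  by (induction rule: cos_cone.induct) (auto intro: admissible_cos admissible_add admissible_scale)

end

section \<open>The periodic kernels \<open>cos\<^sup>2\<^sup>L\<close>\<close>

locale cos_power_kernel =
  fixes P :: real
  assumes P_pos: "P > 0"
begin

definition "freq = pi / P"
definition "mass L = integral {-P/2..P/2} (\<lambda>v. cos (freq * v) ^ (2 * L))"
definition "cos_kernel L v = (1 / mass L) * cos (freq * v) ^ (2 * L)"
definition "height L m = cos (freq * m) ^ (2 * L) / mass L"

lemma freq_pos: "freq > 0"
  using P_pos by (simp add: freq_def)

lemma freq_mono: "a \<le> b \<Longrightarrow> freq * a \<le> freq * b"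
  using freq_pos by (intro mult_left_mono) auto

lemma cos_sq_freq_le:
  assumes "0 < m" "m \<le> v" "v \<le> P - m" "m \<le> P/2"
  shows "cos (freq * v) ^ 2 \<le> cos (freq * m) ^ 2"
proof -
  have half: "freq * (P/2) = pi/2" using P_pos by (simp add: freq_def)
  show ?thesis
  proof (cases "v \<le> P/2")
    case True
    have "freq * v \<le> pi/2" using freq_mono[of v "P/2"] half True by simp
    then show ?thesis using assms freq_pos freq_mono[of m v] by (intro cos_sq_antimono) auto
  next
    case False
    have "freq * (P - v) = pi - freq * v" using P_pos by (simp add: freq_def field_simps)
    then have reflect: "cos (freq * v) ^ 2 = cos (freq * (P - v)) ^ 2" by simp
    have "freq * (P - v) \<le> pi/2" using freq_mono[of "P - v" "P/2"] half False by simp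
    then show ?thesis unfolding reflect using assms freq_pos False freq_mono[of m "P - v"]
      by (intro cos_sq_antimono) auto
  qed
qed

lemma cos_sq_freq_le_abs:
  assumes "0 < m" "m \<le> \<bar>v\<bar>" "\<bar>v\<bar> \<le> P/2"
  shows "cos (freq * v) ^ 2 \<le> cos (freq * m) ^ 2"
proof -
  have "cos (freq * v) ^ 2 = cos (freq * \<bar>v\<bar>) ^ 2" by (cases "v \<ge> 0") auto
  also have "\<dots> \<le> cos (freq * m) ^ 2" using assms by (intro cos_sq_freq_le) auto
  finally show ?thesis .
qed

lemma cos_power_integrable: "(\<lambda>v. cos (freq * v) ^ (2 * L)) integrable_on {a..b}"
  by (intro integrable_continuous_interval continuous_intros)

lemma mass_lower:
  assumes "0 < m" "m \<le> P/2"
  shows "mass L \<ge> m * cos (freq * (m/2)) ^ (2 * L)"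
proof -
  have "integral {-(m/2)..m/2} (\<lambda>v. cos (freq * (m/2)) ^ (2 * L))
      \<le> integral {-(m/2)..m/2} (\<lambda>v. cos (freq * v) ^ (2 * L))"
  proof (rule integral_le)
    fix v assume v: "v \<in> {-(m/2)..m/2}"
    have "freq * (m/2) \<le> pi/2"
      using freq_mono[of "m/2" "P/2"] assms P_pos by (simp add: freq_def)
    then have "cos (freq * (m/2)) ^ 2 \<le> cos (freq * \<bar>v\<bar>) ^ 2"
      using v freq_pos freq_mono[of "\<bar>v\<bar>" "m/2"] by (intro cos_sq_antimono) auto
    also have "\<dots> = cos (freq * v) ^ 2" by (cases "v \<ge> 0") auto
    finally show "cos (freq * (m/2)) ^ (2 * L) \<le> cos (freq * v) ^ (2 * L)"
      unfolding power_mult by (rule power_mono) simp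
  qed (auto intro: cos_power_integrable)
  also have "\<dots> \<le> mass L" unfolding mass_def
    using assms by (intro integral_subset_le cos_power_integrable) (auto simp: power_mult)
  finally show ?thesis using assms by simp
qed

lemma mass_pos: "mass L > 0"
proof -
  have "cos (freq * (P/4)) > 0" using P_pos by (intro cos_gt_zero) (auto simp: freq_def)
  then have "0 < (P/2) * cos (freq * (P/4)) ^ (2 * L)" using P_pos by simp
  then show ?thesis using mass_lower[of "P/2" L] P_pos by simp
qed

lemma cos_kernel_nonneg: "cos_kernel L v \<ge> 0"
  unfolding cos_kernel_def using mass_pos[of L] by (simp add: power_mult)

lemma height_nonneg: "height L m \<ge> 0"
  unfolding height_def using mass_pos[of L] by (simp add: power_mult)

lemma cos_kernel_integrable: "(\<lambda>s. cos_kernel L (w - s)) integrable_on {a..b}"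
  unfolding cos_kernel_def by (intro integrable_continuous_interval continuous_intros)

lemma cos_kernel_le_height:
  assumes "0 < m" "m \<le> v" "v \<le> P - m" "m \<le> P/2"
  shows "cos_kernel L v \<le> height L m"
proof -
  have "(cos (freq * v) ^ 2) ^ L \<le> (cos (freq * m) ^ 2) ^ L"
    using cos_sq_freq_le[OF assms] by (rule power_mono) simp
  then show ?thesis unfolding cos_kernel_def height_def power_mult using mass_pos[of L]
    by (simp add: divide_right_mono)
qed

lemma cos_kernel_le_height_abs:
  assumes "0 < m" "m \<le> \<bar>v\<bar>" "\<bar>v\<bar> \<le> P/2"
  shows "cos_kernel L v \<le> height L m"
proof -
  have "(cos (freq * v) ^ 2) ^ L \<le> (cos (freq * m) ^ 2) ^ L"
    using cos_sq_freq_le_abs[OF assms] by (rule power_mono) simp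
  then show ?thesis unfolding cos_kernel_def height_def power_mult using mass_pos[of L]
    by (simp add: divide_right_mono)
qed

text \<open>By \<open>mass_lower\<close> the normalising mass decays strictly slower than \<open>cos (freq m)\<^sup>2\<^sup>L\<close>.\<close>
lemma height_tendsto_zero:
  assumes "0 < m" "m \<le> P/2"
  shows "(\<lambda>L. height L m) \<longlonglongrightarrow> 0"
proof -
  define a where "a = cos (freq * m) ^ 2"
  define b where "b = cos (freq * (m/2)) ^ 2"
  have m_pos: "0 < freq * m" using freq_pos assms by simp
  have "freq * m \<le> pi/2" using freq_mono[of m "P/2"] assms P_pos by (simp add: freq_def)
  then have half: "0 < freq * (m/2)" "freq * (m/2) < pi/2" "freq * (m/2) < freq * m"
    using m_pos by linarith+
  have b_pos: "b > 0" unfolding b_def using cos_gt_zero[OF half(1,2)] by simp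
  have "cos (freq * m) < cos (freq * (m/2))"
    using half \<open>freq * m \<le> pi/2\<close> by (intro cos_monotone_0_pi) linarith+
  moreover have "0 \<le> cos (freq * m)" using m_pos \<open>freq * m \<le> pi/2\<close> by (intro cos_ge_zero) auto
  ultimately have "a < b" unfolding a_def b_def by (intro power_strict_mono) auto
  then have ratio: "(\<lambda>L. (1/m) * (a / b) ^ L) \<longlonglongrightarrow> 0"
    using b_pos by (intro tendsto_mult_right_zero LIMSEQ_power_zero) (auto simp: a_def)
  have "norm (height L m) \<le> (1/m) * (a / b) ^ L" for L
  proof -
    have "mass L \<ge> m * b ^ L" using mass_lower[OF assms, of L] by (simp add: b_def power_mult)
    then have "height L m \<le> a ^ L / (m * b ^ L)"
      using mass_pos[of L] assms b_pos unfolding height_def a_def power_mult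
      by (intro divide_left_mono) auto
    then show ?thesis using height_nonneg[of L m] by (simp add: power_divide)
  qed
  then show ?thesis by (intro Lim_null_comparison[OF always_eventually ratio]) auto
qed

lemma cos_kernel_shift_period: "cos_kernel L (v + P * of_int k) = cos_kernel L v"
proof -
  have "freq * (v + P * of_int k) = freq * v + of_int k * pi"
    using P_pos by (simp add: freq_def field_simps)
  then show ?thesis unfolding cos_kernel_def power_mult by (simp add: cos_sq_add_int_pi)
qed

lemma cos_kernel_window_integral:
  "integral {0..T} (\<lambda>s. cos_kernel L (w - s)) = integral {w - T..w} (\<lambda>v. cos (freq * v) ^ (2 * L)) / mass L"
proof -
  have "integral {0..T} (\<lambda>s. cos (freq * (w - s)) ^ (2 * L)) = integral {w - T..w} (\<lambda>v. cos (freq * v) ^ (2 * L))"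
    using integral_reflect_shift_real[of T "\<lambda>v. cos (freq * v) ^ (2 * L)"] by simp
  then show ?thesis unfolding cos_kernel_def integral_mult_right by simp
qed

lemma mass_shift_period: "integral {P/2..3*P/2} (\<lambda>v. cos (freq * v) ^ (2 * L)) = mass L"
proof -
  have "(\<lambda>v. cos (freq * v) ^ (2 * L)) \<circ> (+) P = (\<lambda>v. cos (freq * v) ^ (2 * L))"
  proof
    fix v
    have "freq * (P + v) = freq * v + of_int 1 * pi" using P_pos by (simp add: freq_def field_simps)
    then show "((\<lambda>v. cos (freq * v) ^ (2 * L)) \<circ> (+) P) v = cos (freq * v) ^ (2 * L)"
      using cos_sq_add_int_pi[of "freq * v" 1] by (simp add: power_mult)
  qed
  moreover have "-P/2 + P = P/2" "P/2 + P = 3*P/2" by auto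
  ultimately show ?thesis
    using integral_shift_Icc_real[of "-P/2" "P/2" "\<lambda>v. cos (freq * v) ^ (2 * L)" P]
    unfolding mass_def by simp
qed

lemma cos_kernel_window_integral_le:
  assumes "-P/2 \<le> w - T" "w \<le> 3*P/2" "T \<ge> 0"
  shows "integral {0..T} (\<lambda>s. cos_kernel L (w - s)) \<le> 2"
proof -
  have "integral {w - T..w} (\<lambda>v. cos (freq * v) ^ (2 * L))
      \<le> integral {-P/2..3*P/2} (\<lambda>v. cos (freq * v) ^ (2 * L))"
    using assms by (intro integral_subset_le cos_power_integrable) (auto simp: power_mult)
  also have "\<dots> = mass L + integral {P/2..3*P/2} (\<lambda>v. cos (freq * v) ^ (2 * L))"
    unfolding mass_def using P_pos
    by (intro Henstock_Kurzweil_Integration.integral_combine[symmetric] cos_power_integrable) auto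
  also have "\<dots> = 2 * mass L" using mass_shift_period by simp
  finally show ?thesis unfolding cos_kernel_window_integral using mass_pos[of L] by (simp add: field_simps)
qed

lemma mass_split:
  assumes "-P/2 \<le> a" "a \<le> b" "b \<le> P/2"
  shows "mass L = integral {-P/2..a} (\<lambda>v. cos (freq * v) ^ (2 * L))
      + integral {a..b} (\<lambda>v. cos (freq * v) ^ (2 * L)) + integral {b..P/2} (\<lambda>v. cos (freq * v) ^ (2 * L))"
proof -
  have "integral {-P/2..a} (\<lambda>v. cos (freq * v) ^ (2 * L)) + integral {a..P/2} (\<lambda>v. cos (freq * v) ^ (2 * L))
      = mass L"
    unfolding mass_def using assms
    by (intro Henstock_Kurzweil_Integration.integral_combine cos_power_integrable) auto
  moreover have "integral {a..b} (\<lambda>v. cos (freq * v) ^ (2 * L)) + integral {b..P/2} (\<lambda>v. cos (freq * v) ^ (2 * L))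
      = integral {a..P/2} (\<lambda>v. cos (freq * v) ^ (2 * L))"
    using assms by (intro Henstock_Kurzweil_Integration.integral_combine cos_power_integrable) auto
  ultimately show ?thesis by simp
qed

lemma cos_kernel_integral_far:
  assumes "0 < m" "m \<le> P/2" "\<And>v. v \<in> {a..b} \<Longrightarrow> m \<le> \<bar>v\<bar> \<and> \<bar>v\<bar> \<le> P/2" "a \<le> b"
  shows "0 \<le> integral {a..b} (\<lambda>v. cos (freq * v) ^ (2 * L)) / mass L"
    and "integral {a..b} (\<lambda>v. cos (freq * v) ^ (2 * L)) / mass L \<le> (b - a) * height L m"
proof -
  show "0 \<le> integral {a..b} (\<lambda>v. cos (freq * v) ^ (2 * L)) / mass L"
    using mass_pos[of L]
    by (intro divide_nonneg_pos integral_nonneg cos_power_integrable) (auto simp: power_mult)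
  have "integral {a..b} (\<lambda>v. cos (freq * v) ^ (2 * L)) / mass L = integral {a..b} (cos_kernel L)"
    unfolding cos_kernel_def integral_mult_right by simp
  also have "\<dots> \<le> integral {a..b} (\<lambda>v. height L m)"
  proof (rule integral_le)
    show "cos_kernel L integrable_on {a..b}" using cos_kernel_integrable[of L 0 "-b" "-a"] by simp
    fix v assume "v \<in> {a..b}"
    then show "cos_kernel L v \<le> height L m" using assms by (intro cos_kernel_le_height_abs) auto
  qed auto
  also have "\<dots> = (b - a) * height L m" using assms by simp
  finally show "integral {a..b} (\<lambda>v. cos (freq * v) ^ (2 * L)) / mass L \<le> (b - a) * height L m" .
qed

end

section \<open>Periodisation\<close>

locale periodization = positive_cos_kernel T y M + cos_power_kernel P for T y M P +
  assumes period_large: "P > 2 * T"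
begin

text \<open>\<open>yper\<close> is the \<open>P\<close>-periodic function equal to \<open>y\<close> on \<open>[0, T]\<close> and to \<open>0\<close> on \<open>(T, P)\<close>;
  since \<open>cos_kernel L\<close> is a \<open>P\<close>-periodic approximate identity, \<open>yconv (cos_kernel L)\<close> tends
  to \<open>yper\<close> away from its jumps.\<close>
definition "wrap u = u - P * of_int \<lfloor>u / P\<rfloor>"
definition "yper u = (if wrap u \<le> T then y (wrap u) else 0)"
definition "jumps t = {x. wrap (t - x) = 0 \<or> wrap (t - x) = T}"
definition "Myper t = integral {0<..} (\<lambda>x. M x * yper (t - x))"

lemma wrap_bounds: "0 \<le> wrap u" "wrap u < P"
proof -
  have "of_int \<lfloor>u / P\<rfloor> \<le> u / P" "u / P < of_int \<lfloor>u / P\<rfloor> + 1" by linarith+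
  then have "P * of_int \<lfloor>u / P\<rfloor> \<le> P * (u / P)" "P * (u / P) < P * (of_int \<lfloor>u / P\<rfloor> + 1)"
    using P_pos by (intro mult_left_mono mult_strict_left_mono; simp)+
  then show "0 \<le> wrap u" "wrap u < P" unfolding wrap_def using P_pos by (auto simp: algebra_simps)
qed

lemma wrap_eq_self: "0 \<le> u \<Longrightarrow> u < P \<Longrightarrow> wrap u = u"
  using P_pos by (simp add: wrap_def floor_eq_iff field_simps)

lemma wrap_eq_add_period: "-P \<le> u \<Longrightarrow> u < 0 \<Longrightarrow> wrap u = u + P"
proof -
  assume "-P \<le> u" "u < 0"
  then have "\<lfloor>u / P\<rfloor> = -1" using P_pos by (simp add: floor_eq_iff field_simps)
  then show ?thesis unfolding wrap_def by simp
qed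

lemma abs_yper_le_ymax: "\<bar>yper u\<bar> \<le> ymax"
  unfolding yper_def using abs_y_le_ymax[of "wrap u"] wrap_bounds[of u] ymax_nonneg by auto

lemma norm_M_mult_yper_le: "norm (M x * yper u) \<le> ymax * \<bar>M x\<bar>"
proof -
  have "\<bar>M x\<bar> * \<bar>yper u\<bar> \<le> \<bar>M x\<bar> * ymax" by (intro mult_left_mono abs_yper_le_ymax) auto
  then show ?thesis by (simp add: abs_mult algebra_simps)
qed

lemma yconv_cos_kernel: "yconv (cos_kernel L) u = integral {0..T} (\<lambda>s. y s * cos_kernel L (wrap u - s))"
proof -
  have "cos_kernel L (u - s) = cos_kernel L (wrap u - s)" for s
    using cos_kernel_shift_period[of L "wrap u - s" "\<lfloor>u / P\<rfloor>"] by (simp add: wrap_def)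
  then show ?thesis unfolding yconv_def by simp
qed

lemma y_mult_cos_kernel_integrable: "(\<lambda>s. y s * cos_kernel L (w - s)) integrable_on {0..T}"
  unfolding cos_kernel_def by (intro y_mult_integrable continuous_intros)

lemma cos_kernel_window_le_2:
  "w \<in> {0..<P} \<Longrightarrow> integral {0..T} (\<lambda>s. cos_kernel L (w - s)) \<le> 2"
  using period_large T_pos by (intro cos_kernel_window_integral_le) auto

lemma abs_yconv_cos_kernel_le: "\<bar>yconv (cos_kernel L) u\<bar> \<le> 2 * ymax"
proof -
  have "\<bar>yconv (cos_kernel L) u\<bar> \<le> integral {0..T} (\<lambda>s. ymax * cos_kernel L (wrap u - s))"
    unfolding yconv_cos_kernel real_norm_def[symmetric]
  proof (rule integral_norm_bound_integral)
    show "(\<lambda>s. ymax * cos_kernel L (wrap u - s)) integrable_on {0..T}"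
      by (intro integrable_on_mult_right cos_kernel_integrable)
    fix s assume "s \<in> {0..T}"
    then show "norm (y s * cos_kernel L (wrap u - s)) \<le> ymax * cos_kernel L (wrap u - s)"
      using abs_y_le_ymax cos_kernel_nonneg by (simp add: abs_mult mult_right_mono)
  qed (rule y_mult_cos_kernel_integrable)
  also have "\<dots> \<le> ymax * 2"
    using cos_kernel_window_le_2 wrap_bounds ymax_nonneg by (simp add: mult_left_mono)
  finally show ?thesis by simp
qed

lemma yconv_cos_kernel_tendsto_zero:
  assumes "T < wrap u"
  shows "(\<lambda>L. yconv (cos_kernel L) u) \<longlonglongrightarrow> 0"
proof -
  define w where "w = wrap u"
  define m where "m = min (w - T) (P - w)"
  have w: "T < w" "w < P" using assms wrap_bounds[of u] unfolding w_def by auto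
  then have m: "0 < m" "m \<le> w - T" "m \<le> P - w" "m \<le> P/2" unfolding m_def using T_pos by (auto simp: min_def)
  have "norm (yconv (cos_kernel L) u) \<le> integral {0..T} (\<lambda>s. ymax * height L m)" for L
    unfolding yconv_cos_kernel w_def[symmetric] real_norm_def[symmetric]
  proof (rule integral_norm_bound_integral)
    fix s assume s: "s \<in> {0..T}"
    have "cos_kernel L (w - s) \<le> height L m" using s m by (intro cos_kernel_le_height) auto
    then have "\<bar>y s\<bar> * cos_kernel L (w - s) \<le> ymax * height L m"
      by (rule mult_mono[OF abs_y_le_ymax[OF s] _ ymax_nonneg cos_kernel_nonneg])
    then show "norm (y s * cos_kernel L (w - s)) \<le> ymax * height L m"
      using cos_kernel_nonneg[of L "w - s"] by (simp add: abs_mult)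
  qed (auto intro: y_mult_cos_kernel_integrable)
  then have "\<forall>L. norm (yconv (cos_kernel L) u) \<le> T * (ymax * height L m)"
    using T_pos by (simp add: ac_simps)
  moreover have "(\<lambda>L. T * (ymax * height L m)) \<longlonglongrightarrow> 0"
    by (intro tendsto_mult_right_zero height_tendsto_zero m(1,4))
  ultimately show ?thesis by (rule Lim_null_comparison[OF always_eventually])
qed

lemma cos_kernel_mass_defect:
  assumes "0 < w" "w < T"
  defines "m \<equiv> min w (T - w)"
  shows "\<bar>integral {0..T} (\<lambda>s. cos_kernel L (w - s)) - 1\<bar> \<le> P * height L m"
proof -
  have m: "0 < m" "m \<le> P/2" "m \<le> w" "m \<le> T - w"
    using assms period_large unfolding m_def by (auto simp: min_def)
  define X where "X = integral {-P/2..w - T} (\<lambda>v. cos (freq * v) ^ (2 * L)) / mass L"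
  define Y where "Y = integral {w..P/2} (\<lambda>v. cos (freq * v) ^ (2 * L)) / mass L"
  have "mass L = integral {-P/2..w - T} (\<lambda>v. cos (freq * v) ^ (2 * L))
      + integral {w - T..w} (\<lambda>v. cos (freq * v) ^ (2 * L)) + integral {w..P/2} (\<lambda>v. cos (freq * v) ^ (2 * L))"
    using assms period_large by (intro mass_split) auto
  then have "integral {w - T..w} (\<lambda>v. cos (freq * v) ^ (2 * L)) = mass L
      - integral {-P/2..w - T} (\<lambda>v. cos (freq * v) ^ (2 * L)) - integral {w..P/2} (\<lambda>v. cos (freq * v) ^ (2 * L))"
    by linarith
  then have defect: "integral {0..T} (\<lambda>s. cos_kernel L (w - s)) - 1 = - (X + Y)"
    unfolding cos_kernel_window_integral X_def Y_def using mass_pos[of L] by (simp add: diff_divide_distrib add_divide_distrib)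
  have far_X: "m \<le> \<bar>v\<bar> \<and> \<bar>v\<bar> \<le> P/2" if "v \<in> {-P/2..w - T}" for v
    using that m assms by auto
  have far_Y: "m \<le> \<bar>v\<bar> \<and> \<bar>v\<bar> \<le> P/2" if "v \<in> {w..P/2}" for v
    using that m assms by auto
  have ordered: "-P/2 \<le> w - T" "w \<le> P/2" using assms period_large by auto
  note X_bounds = cos_kernel_integral_far[OF m(1,2) far_X ordered(1), of L, folded X_def]
  note Y_bounds = cos_kernel_integral_far[OF m(1,2) far_Y ordered(2), of L, folded Y_def]
  have "((w - T) - (-P/2)) * height L m + (P/2 - w) * height L m \<le> P * height L m"
    using height_nonneg[of L m] T_pos by (simp add: algebra_simps mult_right_mono)
  with X_bounds Y_bounds show ?thesis unfolding defect by linarith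
qed

lemma yconv_cos_kernel_minus_y:
  "yconv (cos_kernel L) u - y (wrap u) = integral {0..T} (\<lambda>s. (y s - y (wrap u)) * cos_kernel L (wrap u - s))
     + y (wrap u) * (integral {0..T} (\<lambda>s. cos_kernel L (wrap u - s)) - 1)"
  unfolding yconv_cos_kernel left_diff_distrib
  using y_mult_cos_kernel_integrable integrable_on_mult_right[OF cos_kernel_integrable]
  by (simp add: integral_diff algebra_simps)

lemma cos_kernel_local_error:
  assumes w: "w \<in> {0..T}" and d: "0 < d" "d \<le> P/2" and "\<epsilon> \<ge> 0"
    and near: "\<And>s. s \<in> {0..T} \<Longrightarrow> \<bar>s - w\<bar> < d \<Longrightarrow> \<bar>y s - y w\<bar> \<le> \<epsilon>"
  shows "\<bar>integral {0..T} (\<lambda>s. (y s - y w) * cos_kernel L (w - s))\<bar> \<le> 2 * \<epsilon> + 2 * ymax * T * height L d"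
proof -
  have "norm (integral {0..T} (\<lambda>s. (y s - y w) * cos_kernel L (w - s)))
      \<le> integral {0..T} (\<lambda>s. \<epsilon> * cos_kernel L (w - s) + 2 * ymax * height L d)"
  proof (rule integral_norm_bound_integral)
    show "(\<lambda>s. (y s - y w) * cos_kernel L (w - s)) integrable_on {0..T}"
      unfolding left_diff_distrib
      by (intro integrable_diff y_mult_cos_kernel_integrable integrable_on_mult_right cos_kernel_integrable)
    show "(\<lambda>s. \<epsilon> * cos_kernel L (w - s) + 2 * ymax * height L d) integrable_on {0..T}"
      by (intro integrable_add integrable_on_mult_right cos_kernel_integrable integrable_const_ivl)
    fix s assume s: "s \<in> {0..T}"
    have k: "0 \<le> cos_kernel L (w - s)" by (rule cos_kernel_nonneg)
    have "0 \<le> 2 * ymax * height L d" using ymax_nonneg height_nonneg[of L d] by simp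
    moreover have "\<bar>y s - y w\<bar> * cos_kernel L (w - s) \<le> \<epsilon> * cos_kernel L (w - s) + 2 * ymax * height L d"
    proof (cases "\<bar>s - w\<bar> < d")
      case True
      then show ?thesis using near[OF s] k \<open>0 \<le> 2 * ymax * height L d\<close>
        by (simp add: add_increasing2 mult_right_mono)
    next
      case False
      moreover have "\<bar>w - s\<bar> \<le> P/2" unfolding abs_le_iff using s w period_large by auto
      ultimately have "cos_kernel L (w - s) \<le> height L d"
        using d by (intro cos_kernel_le_height_abs) auto
      moreover have "\<bar>y s - y w\<bar> \<le> 2 * ymax" using abs_y_le_ymax[OF s] abs_y_le_ymax[OF w] by linarith
      ultimately have "\<bar>y s - y w\<bar> * cos_kernel L (w - s) \<le> 2 * ymax * height L d"
        using k by (intro mult_mono) auto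
      then show ?thesis using k \<open>\<epsilon> \<ge> 0\<close> by (simp add: add_increasing)
    qed
    ultimately show "norm ((y s - y w) * cos_kernel L (w - s)) \<le> \<epsilon> * cos_kernel L (w - s) + 2 * ymax * height L d"
      using k by (simp add: abs_mult)
  qed
  also have "\<dots> = \<epsilon> * integral {0..T} (\<lambda>s. cos_kernel L (w - s)) + T * (2 * ymax * height L d)"
    using T_pos by (subst integral_add) (auto intro: integrable_on_mult_right cos_kernel_integrable)
  also have "\<dots> \<le> \<epsilon> * 2 + T * (2 * ymax * height L d)"
    using cos_kernel_window_le_2[of w L] w period_large \<open>\<epsilon> \<ge> 0\<close> by (intro add_right_mono mult_left_mono) auto
  finally show ?thesis by (simp add: algebra_simps)
qed

lemma yconv_cos_kernel_tendsto_y: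
  assumes "0 < wrap u" "wrap u < T"
  shows "(\<lambda>L. yconv (cos_kernel L) u) \<longlonglongrightarrow> y (wrap u)"
proof (rule LIMSEQ_I)
  fix r :: real assume r: "0 < r"
  define w where "w = wrap u"
  define m where "m = min w (T - w)"
  have w: "0 < w" "w < T" using assms unfolding w_def by auto
  then have m: "0 < m" "m \<le> P/2" using period_large unfolding m_def by (auto simp: min_def)
  obtain d where d: "d > 0" and near: "\<And>s. s \<in> {0..T} \<Longrightarrow> dist s w < d \<Longrightarrow> dist (y s) (y w) < r/4"
    using y_cont w r unfolding continuous_on_iff by (metis atLeastAtMost_iff divide_pos_pos less_le zero_less_numeral)
  define d' where "d' = min d m"
  have d': "0 < d'" "d' \<le> P/2" using d m unfolding d'_def by auto
  define Z where "Z L = 2 * ymax * T * height L d' + ymax * P * height L m" for L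
  have "Z \<longlonglongrightarrow> 2 * ymax * T * 0 + ymax * P * 0"
    unfolding Z_def[abs_def] by (intro tendsto_intros height_tendsto_zero d' m)
  then obtain L0 where L0: "\<And>L. L \<ge> L0 \<Longrightarrow> \<bar>Z L\<bar> < r/2"
    using LIMSEQ_D[of Z 0 "r/2"] r by auto
  have error: "\<bar>yconv (cos_kernel L) u - y w\<bar> \<le> r/2 + Z L" for L
  proof -
    have "\<bar>integral {0..T} (\<lambda>s. (y s - y w) * cos_kernel L (w - s))\<bar> \<le> 2 * (r/4) + 2 * ymax * T * height L d'"
      using w d' r near by (intro cos_kernel_local_error) (auto simp: d'_def dist_real_def less_imp_le)
    moreover have "\<bar>y w * (integral {0..T} (\<lambda>s. cos_kernel L (w - s)) - 1)\<bar> \<le> ymax * (P * height L m)"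
      unfolding abs_mult using abs_y_le_ymax[of w] cos_kernel_mass_defect[OF w, of L] ymax_nonneg w
      unfolding m_def by (intro mult_mono) auto
    ultimately show ?thesis using yconv_cos_kernel_minus_y[of L u] unfolding w_def Z_def by simp
  qed
  show "\<exists>L0. \<forall>L\<ge>L0. norm (yconv (cos_kernel L) u - y (wrap u)) < r"
  proof (intro exI allI impI)
    fix L assume "L0 \<le> L"
    then have "Z L < r/2" using L0 abs_ge_self[of "Z L"] by fastforce
    then show "norm (yconv (cos_kernel L) u - y (wrap u)) < r" using error[of L] unfolding w_def by simp
  qed
qed

lemma yconv_cos_kernel_tendsto:
  "wrap u \<noteq> 0 \<Longrightarrow> wrap u \<noteq> T \<Longrightarrow> (\<lambda>L. yconv (cos_kernel L) u) \<longlonglongrightarrow> yper u"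
  using yconv_cos_kernel_tendsto_y[of u] yconv_cos_kernel_tendsto_zero[of u] wrap_bounds[of u]
  unfolding yper_def by (cases "wrap u < T") auto

lemma jumps_negligible: "negligible (jumps t)"
proof (rule negligible_countable, rule countable_subset)
  show "jumps t \<subseteq> range (\<lambda>k::int. t - P * of_int k) \<union> range (\<lambda>k::int. t - T - P * of_int k)"
  proof
    fix x assume "x \<in> jumps t"
    then have "x = t - P * of_int \<lfloor>(t - x) / P\<rfloor> \<or> x = t - T - P * of_int \<lfloor>(t - x) / P\<rfloor>"
      unfolding jumps_def wrap_def by auto
    then show "x \<in> range (\<lambda>k::int. t - P * of_int k) \<union> range (\<lambda>k::int. t - T - P * of_int k)"
      by blast
  qed
qed auto

lemma admissible_cos_kernel: "admissible (cos_kernel L)"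
  unfolding cos_kernel_def[abs_def] using mass_pos[of L]
  by (intro cos_cone_admissible cos_cone_scale cos_cone_cos_even_power) auto

lemma abs_kconv_cos_kernel_le: "\<bar>kconv (cos_kernel L) t\<bar> \<le> 2 * ymax * Mnorm"
  unfolding kconv_def
  by (intro M_integral_bound M_mult_yconv_integrable admissible_cos_kernel abs_yconv_cos_kernel_le)

lemma kconv_cos_kernel_tendsto:
  "(\<lambda>x. M x * yper (t - x)) integrable_on {0<..} \<and> (\<lambda>L. kconv (cos_kernel L) t) \<longlonglongrightarrow> Myper t"
proof -
  define S where "S = {0<..} - jumps t"
  have spike: "negligible {x \<in> S - {0<..}. f x \<noteq> 0}" "negligible {x \<in> {0<..} - S. f x \<noteq> 0}"
    for f :: "real \<Rightarrow> real"
    unfolding S_def by (auto intro: negligible_subset[OF jumps_negligible[of t]])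
  have "\<And>L. (\<lambda>x. M x * yconv (cos_kernel L) (t - x)) integrable_on S"
    by (rule integrable_spike_set[OF M_mult_yconv_integrable[OF admissible_cos_kernel] spike(2,1)])
  moreover have "(\<lambda>x. 2 * ymax * \<bar>M x\<bar>) integrable_on S"
    by (rule integrable_spike_set[OF integrable_on_mult_right[OF abs_M_integrable] spike(2,1)])
  moreover have "\<And>L x. norm (M x * yconv (cos_kernel L) (t - x)) \<le> 2 * ymax * \<bar>M x\<bar>"
    using abs_yconv_cos_kernel_le by (simp add: abs_mult mult.commute mult_left_mono)
  moreover have "\<And>x. x \<in> S \<Longrightarrow> (\<lambda>L. M x * yconv (cos_kernel L) (t - x)) \<longlonglongrightarrow> M x * yper (t - x)"
    unfolding S_def jumps_def by (intro tendsto_intros yconv_cos_kernel_tendsto) auto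
  ultimately have "(\<lambda>x. M x * yper (t - x)) integrable_on S \<and>
      (\<lambda>L. integral S (\<lambda>x. M x * yconv (cos_kernel L) (t - x))) \<longlonglongrightarrow> integral S (\<lambda>x. M x * yper (t - x))"
    using dominated_convergence[where f="\<lambda>L x. M x * yconv (cos_kernel L) (t - x)" and S=S
        and h="\<lambda>x. 2 * ymax * \<bar>M x\<bar>" and g="\<lambda>x. M x * yper (t - x)"] by blast
  moreover have "integral S (\<lambda>x. M x * yconv (cos_kernel L) (t - x)) = kconv (cos_kernel L) t" for L
    unfolding kconv_def by (rule integral_spike_set[OF spike(1,2)])
  moreover have "integral S (\<lambda>x. M x * yper (t - x)) = Myper t"
    unfolding Myper_def by (rule integral_spike_set[OF spike(1,2)])
  ultimately show ?thesis using integrable_spike_set[OF _ spike(1,2)] by auto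
qed

lemma abs_Myper_le: "\<bar>Myper t\<bar> \<le> ymax * Mnorm"
  unfolding Myper_def using kconv_cos_kernel_tendsto abs_yper_le_ymax by (intro M_integral_bound) auto

lemma form_Myper_nonneg:
  shows "(\<lambda>t. y t * Myper t) integrable_on {0..T}" and "integral {0..T} (\<lambda>t. y t * Myper t) \<ge> 0"
proof -
  have integrable: "(\<lambda>t. y t * kconv (cos_kernel L) t) integrable_on {0..T}" for L
    using admissible_cos_kernel[of L] unfolding admissible_def by (intro y_mult_integrable) auto
  have bound: "norm (y t * kconv (cos_kernel L) t) \<le> ymax * (2 * ymax * Mnorm)" if "t \<in> {0..T}" for L t
    unfolding real_norm_def abs_mult using abs_y_le_ymax[OF that] abs_kconv_cos_kernel_le[of L t]
    by (intro mult_mono) auto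
  have limit: "(\<lambda>L. y t * kconv (cos_kernel L) t) \<longlonglongrightarrow> y t * Myper t" for t
    using kconv_cos_kernel_tendsto[of t] by (intro tendsto_intros) auto
  have nonneg: "integral {0..T} (\<lambda>t. y t * kconv (cos_kernel L) t) \<ge> 0" for L
    using admissible_cos_kernel[of L] unfolding admissible_def form_def by auto
  show "(\<lambda>t. y t * Myper t) integrable_on {0..T}" "integral {0..T} (\<lambda>t. y t * Myper t) \<ge> 0"
    using integral_nonneg_limit[OF integrable integrable_const_ivl bound limit nonneg] by auto
qed

end

section \<open>Removing the period and the damping\<close>

definition causal_conv :: "(real \<Rightarrow> real) \<Rightarrow> (real \<Rightarrow> real) \<Rightarrow> real \<Rightarrow> real" where
  "causal_conv K y t = integral {0<..t} (\<lambda>x. K x * y (t - x))"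

context positive_cos_kernel
begin

lemma Mtail_integrable: "(\<lambda>x. if x \<in> {a..} then \<bar>M x\<bar> else 0) integrable_on S"
  if "S \<in> sets lebesgue" "S \<subseteq> {0<..}"
  unfolding integrable_restrict_Int using that by (intro abs_M_integrable_on) auto

lemma Mtail_tendsto_zero: "(\<lambda>k. Mtail (T + 1 + real k)) \<longlonglongrightarrow> 0"
proof -
  have "(\<lambda>k. if x \<in> {T + 1 + real k..} then \<bar>M x\<bar> else 0) \<longlonglongrightarrow> 0" for x
  proof (rule tendsto_eventually)
    obtain k0 :: nat where "x < real k0" using reals_Archimedean2 by blast
    then show "\<forall>\<^sub>F k in sequentially. (if x \<in> {T + 1 + real k..} then \<bar>M x\<bar> else 0) = 0"
      unfolding eventually_sequentially using T_pos by (intro exI[of _ k0]) auto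
  qed
  then show ?thesis
    using dominated_convergence(2)[where f="\<lambda>k x. if x \<in> {T + 1 + real k..} then \<bar>M x\<bar> else 0"
        and h="\<lambda>x. \<bar>M x\<bar>" and g="\<lambda>x. 0" and S="{0<..}", OF Mtail_integrable abs_M_integrable]
    unfolding Mtail_def by simp
qed

end

context periodization
begin

lemma M_mult_yper_integrable_on:
  assumes "S \<in> sets lebesgue" "S \<subseteq> {0<..}"
  shows "(\<lambda>x. M x * yper (t - x)) integrable_on S"
proof -
  have "(\<lambda>x. M x * yper (t - x)) absolutely_integrable_on {0<..}"
  proof (rule absolutely_integrable_integrable_bound)
    show "(\<lambda>x. ymax * \<bar>M x\<bar>) integrable_on {0<..}" by (intro integrable_on_mult_right abs_M_integrable)
    show "norm (M x * yper (t - x)) \<le> ymax * \<bar>M x\<bar>" for x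
      by (rule norm_M_mult_yper_le)
  qed (use kconv_cos_kernel_tendsto in blast)
  then have "(\<lambda>x. M x * yper (t - x)) absolutely_integrable_on S"
    by (rule set_integrable_subset[OF _ assms])
  then show ?thesis unfolding absolutely_integrable_on_def by simp
qed

lemma Myper_split:
  assumes t: "t \<in> {0..T}"
  shows "Myper t = causal_conv M y t + integral {t<..} (\<lambda>x. M x * yper (t - x))"
proof -
  have "{0<..} = {0<..t} \<union> {t<..}" using t by auto
  then have "Myper t = integral ({0<..t} \<union> {t<..}) (\<lambda>x. M x * yper (t - x))"
    unfolding Myper_def by simp
  also have "\<dots> = integral {0<..t} (\<lambda>x. M x * yper (t - x)) + integral {t<..} (\<lambda>x. M x * yper (t - x))"
  proof (rule integral_Un)
    have "{0<..t} \<inter> {t<..} = {}" by auto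
    then show "negligible ({0<..t} \<inter> {t<..})" by simp
  qed (use t in \<open>auto intro: M_mult_yper_integrable_on\<close>)
  finally have "Myper t = integral {0<..t} (\<lambda>x. M x * yper (t - x)) + integral {t<..} (\<lambda>x. M x * yper (t - x))" .
  moreover have "integral {0<..t} (\<lambda>x. M x * yper (t - x)) = causal_conv M y t"
    unfolding causal_conv_def
  proof (rule integral_cong)
    fix x assume x: "x \<in> {0<..t}"
    then have "wrap (t - x) = t - x" using t period_large T_pos by (intro wrap_eq_self) auto
    then show "M x * yper (t - x) = M x * y (t - x)" unfolding yper_def using x t by auto
  qed
  ultimately show ?thesis by simp
qed

text \<open>Beyond \<open>x = t\<close> the periodic extension vanishes up to \<open>x = t + P - T\<close>, so only the tail
  of \<open>M\<close> beyond \<open>P - T\<close> contributes.\<close>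
lemma abs_Myper_minus_causal_conv_le:
  assumes t: "t \<in> {0..T}"
  shows "\<bar>Myper t - causal_conv M y t\<bar> \<le> ymax * Mtail (P - T)"
proof -
  define tail where "tail x = ymax * (if x \<in> {P - T..} then \<bar>M x\<bar> else 0)" for x
  have tail_int: "tail integrable_on {t<..}" "tail integrable_on {0<..}"
    unfolding tail_def using t by (intro integrable_on_mult_right Mtail_integrable; force)+
  have "norm (integral {t<..} (\<lambda>x. M x * yper (t - x))) \<le> integral {t<..} tail"
  proof (rule integral_norm_bound_integral)
    fix x assume x: "x \<in> {t<..}"
    show "norm (M x * yper (t - x)) \<le> tail x"
    proof (cases "x < t + P - T")
      case True
      then have "wrap (t - x) = t - x + P" using x t period_large by (intro wrap_eq_add_period) auto
      then have "yper (t - x) = 0" unfolding yper_def using x True by auto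
      then show ?thesis unfolding tail_def using ymax_nonneg by simp
    next
      case False
      then show ?thesis unfolding tail_def using t norm_M_mult_yper_le[of x "t - x"] by simp
    qed
  qed (use t tail_int in \<open>auto intro: M_mult_yper_integrable_on\<close>)
  also have "\<dots> \<le> integral {0<..} tail"
    using t tail_int ymax_nonneg by (intro integral_subset_le) (auto simp: tail_def)
  also have "\<dots> = ymax * Mtail (P - T)" unfolding tail_def Mtail_def by simp
  finally show ?thesis using Myper_split[OF t] by simp
qed

end

context positive_cos_kernel
begin

lemma causal_form_nonneg:
  shows "(\<lambda>t. y t * causal_conv M y t) integrable_on {0..T}"
    and "integral {0..T} (\<lambda>t. y t * causal_conv M y t) \<ge> 0"
proof -
  define P where "P k = 2 * T + 1 + real k" for k
  have per: "periodization T y M (P k)" for k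
    unfolding P_def using T_pos by unfold_locales auto
  define Myper where "Myper k = periodization.Myper T y M (P k)" for k
  have integrable: "(\<lambda>t. y t * Myper k t) integrable_on {0..T}"
    and nonneg: "integral {0..T} (\<lambda>t. y t * Myper k t) \<ge> 0" for k
    using periodization.form_Myper_nonneg[OF per] unfolding Myper_def by auto
  have bound: "norm (y t * Myper k t) \<le> ymax * (ymax * Mnorm)" if "t \<in> {0..T}" for k t
    unfolding real_norm_def abs_mult Myper_def
    using abs_y_le_ymax[OF that] periodization.abs_Myper_le[OF per] ymax_nonneg
    by (intro mult_mono) auto
  have "(\<lambda>k. Myper k t) \<longlonglongrightarrow> causal_conv M y t" if t: "t \<in> {0..T}" for t
  proof -
    have "\<forall>k. norm (Myper k t - causal_conv M y t) \<le> ymax * Mtail (T + 1 + real k)"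
      using periodization.abs_Myper_minus_causal_conv_le[OF per t] unfolding Myper_def P_def
      by (simp add: add.assoc)
    moreover have "(\<lambda>k. ymax * Mtail (T + 1 + real k)) \<longlonglongrightarrow> 0"
      by (intro tendsto_mult_right_zero Mtail_tendsto_zero)
    ultimately have "(\<lambda>k. Myper k t - causal_conv M y t) \<longlonglongrightarrow> 0"
      by (rule Lim_null_comparison[OF always_eventually])
    then show ?thesis by (simp add: LIM_zero_iff)
  qed
  then have limit: "(\<lambda>k. y t * Myper k t) \<longlonglongrightarrow> y t * causal_conv M y t" if "t \<in> {0..T}" for t
    using that by (intro tendsto_intros)
  show "(\<lambda>t. y t * causal_conv M y t) integrable_on {0..T}"
    and "integral {0..T} (\<lambda>t. y t * causal_conv M y t) \<ge> 0"
    using integral_nonneg_limit[OF integrable integrable_const_ivl bound limit nonneg] by auto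
qed

end

lemma Re_laplace_integrand:
  "Re (exp (- z * complex_of_real t) * complex_of_real (N t)) = exp (- Re z * t) * cos (Im z * t) * N t"
  by (simp add: Re_exp)

text \<open>The cosine transform of the damped kernel at \<open>\<theta>\<close> is \<open>Re N\<^sup>^(\<sigma> + i\<theta>)\<close>.\<close>
lemma positive_cos_kernel_damped:
  fixes N :: "real \<Rightarrow> real"
  assumes lap_int: "\<And>z. Re z > 0 \<Longrightarrow>
        (\<lambda>t. exp (- z * complex_of_real t) * complex_of_real (N t)) absolutely_integrable_on {0<..}"
    and lap_pos: "\<And>z. Re z > 0 \<Longrightarrow> Re (laplace N z) > 0"
    and "\<sigma> > 0" "T > 0" "continuous_on {0..T} y"
  shows "positive_cos_kernel T y (\<lambda>x. exp (- \<sigma> * x) * N x)"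
proof
  define M where "M x = exp (- \<sigma> * x) * N x" for x
  define F where "F \<theta> t = exp (- Complex \<sigma> \<theta> * complex_of_real t) * complex_of_real (N t)" for \<theta> t
  have M_cos: "M x * cos (\<theta> * x) = (Re \<circ> F \<theta>) x" for \<theta> x
    unfolding M_def F_def o_def Re_laplace_integrand by simp
  have "(Re \<circ> F 0) absolutely_integrable_on {0<..}"
    unfolding F_def by (intro absolutely_integrable_linear lap_int bounded_linear_Re) (use assms in simp)
  moreover have "Re \<circ> F 0 = M" using M_cos[of _ 0] by fastforce
  ultimately show "M absolutely_integrable_on {0<..}" by simp
  show "integral {0<..} (\<lambda>x. M x * cos (\<theta> * x)) \<ge> 0" for \<theta>
  proof -
    have "F \<theta> integrable_on {0<..}"
      using lap_int[of "Complex \<sigma> \<theta>"] assms unfolding F_def absolutely_integrable_on_def by simp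
    then have "integral {0<..} (\<lambda>x. M x * cos (\<theta> * x)) = Re (integral {0<..} (F \<theta>))"
      unfolding M_cos by (rule integral_linear[OF _ bounded_linear_Re])
    also have "\<dots> = Re (laplace N (Complex \<sigma> \<theta>))" unfolding laplace_def F_def ..
    also have "\<dots> > 0" using assms by (intro lap_pos) simp
    finally show ?thesis by simp
  qed
qed (use assms in auto)

lemma causal_conv_damped_tendsto:
  fixes N :: "real \<Rightarrow> real"
  assumes N_int: "N absolutely_integrable_on {0<..T}" and y_cont: "continuous_on {0..T} y"
    and y_bound: "\<forall>s \<in> {0..T}. \<bar>y s\<bar> \<le> B"
    and damping: "\<And>k. \<sigma> k \<ge> 0" "\<sigma> \<longlonglongrightarrow> 0" and t: "t \<in> {0..T}"
  shows "(\<lambda>k. causal_conv (\<lambda>x. exp (- \<sigma> k * x) * N x) y t) \<longlonglongrightarrow> causal_conv N y t"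
    and "\<bar>causal_conv (\<lambda>x. exp (- \<sigma> k * x) * N x) y t\<bar> \<le> B * integral {0<..T} (\<lambda>x. \<bar>N x\<bar>)"
proof -
  have N_int_t: "N absolutely_integrable_on {0<..t}"
    by (rule set_integrable_subset[OF N_int]) (use t in auto)
  have abs_N_int: "(\<lambda>x. \<bar>N x\<bar>) integrable_on {0<..t}" "(\<lambda>x. \<bar>N x\<bar>) integrable_on {0<..T}"
    using N_int_t N_int unfolding absolutely_integrable_on_def by auto
  have weight_le: "\<bar>exp (- \<sigma> k * x) * y (t - x)\<bar> \<le> B" if "x \<in> {0<..t}" for k x
  proof -
    have "exp (- \<sigma> k * x) \<le> 1" using damping(1)[of k] that by simp
    then have "\<bar>exp (- \<sigma> k * x)\<bar> * \<bar>y (t - x)\<bar> \<le> 1 * B"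
      using y_bound that t by (intro mult_mono) auto
    then show ?thesis by (simp add: abs_mult)
  qed
  have "continuous_on {0<..t} (\<lambda>x. y (t - x))"
    using t by (intro continuous_on_compose2[OF y_cont] continuous_intros) auto
  then have "(\<lambda>x. (exp (- \<sigma> k * x) * y (t - x)) * N x) absolutely_integrable_on {0<..t}" for k
    using weight_le by (intro absolutely_integrable_bounded_continuous_product[OF N_int_t])
      (auto intro!: continuous_intros)
  then have integrable: "(\<lambda>x. (exp (- \<sigma> k * x) * N x) * y (t - x)) integrable_on {0<..t}" for k
    unfolding absolutely_integrable_on_def by (simp add: algebra_simps)
  have dominated: "norm ((exp (- \<sigma> k * x) * N x) * y (t - x)) \<le> B * \<bar>N x\<bar>" if "x \<in> {0<..t}" for k x
    using mult_right_mono[OF weight_le[OF that, of k] abs_ge_zero[of "N x"]] by (simp add: abs_mult algebra_simps)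
  have "(\<lambda>k. (exp (- \<sigma> k * x) * N x) * y (t - x)) \<longlonglongrightarrow> (exp (- 0 * x) * N x) * y (t - x)" for x
    by (intro tendsto_intros damping)
  then show "(\<lambda>k. causal_conv (\<lambda>x. exp (- \<sigma> k * x) * N x) y t) \<longlonglongrightarrow> causal_conv N y t"
    unfolding causal_conv_def
    using dominated_convergence(2)[OF integrable integrable_on_mult_right[OF abs_N_int(1)] dominated] by simp
  have "norm (causal_conv (\<lambda>x. exp (- \<sigma> k * x) * N x) y t) \<le> integral {0<..t} (\<lambda>x. B * \<bar>N x\<bar>)"
    unfolding causal_conv_def
    by (rule integral_norm_bound_integral[OF integrable integrable_on_mult_right[OF abs_N_int(1)] dominated])
  also have "\<dots> \<le> integral {0<..T} (\<lambda>x. B * \<bar>N x\<bar>)"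
  proof (rule integral_subset_le)
    have "0 \<le> B" using t y_bound abs_ge_zero[of "y t"] by (meson order_trans)
    then show "\<forall>x \<in> {0<..T}. B * \<bar>N x\<bar> \<ge> 0" by simp
  qed (use t in \<open>auto intro: integrable_on_mult_right abs_N_int\<close>)
  finally show "\<bar>causal_conv (\<lambda>x. exp (- \<sigma> k * x) * N x) y t\<bar> \<le> B * integral {0<..T} (\<lambda>x. \<bar>N x\<bar>)"
    by simp
qed

lemma causal_form_nonneg_laplace:
  fixes N :: "real \<Rightarrow> real"
  assumes N_int: "N absolutely_integrable_on {0<..T}"
    and lap_int: "\<And>z. Re z > 0 \<Longrightarrow>
        (\<lambda>t. exp (- z * complex_of_real t) * complex_of_real (N t)) absolutely_integrable_on {0<..}"
    and lap_pos: "\<And>z. Re z > 0 \<Longrightarrow> Re (laplace N z) > 0"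
    and T: "T > 0" and y_cont: "continuous_on {0..T} y"
  shows "integral {0..T} (\<lambda>t. y t * causal_conv N y t) \<ge> 0"
proof -
  have "bounded (y ` {0..T})" by (intro compact_imp_bounded compact_continuous_image y_cont) auto
  then obtain B where "\<forall>s \<in> {0..T}. \<bar>y s\<bar> \<le> B" by (auto simp: bounded_iff)
  note y_bound = this
  then have B: "\<And>s. s \<in> {0..T} \<Longrightarrow> \<bar>y s\<bar> \<le> B" by blast
  define \<sigma> where "\<sigma> k = inverse (real (Suc k))" for k
  have \<sigma>: "\<And>k. \<sigma> k > 0" "\<sigma> \<longlonglongrightarrow> 0"
    unfolding \<sigma>_def by (simp, rule LIMSEQ_inverse_real_of_nat)
  define C where "C = B * integral {0<..T} (\<lambda>x. \<bar>N x\<bar>)"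
  define f where "f k t = y t * causal_conv (\<lambda>x. exp (- \<sigma> k * x) * N x) y t" for k t
  note damped = causal_conv_damped_tendsto[OF N_int y_cont y_bound less_imp_le[OF \<sigma>(1)] \<sigma>(2)]
  note positive = positive_cos_kernel.causal_form_nonneg[OF
      positive_cos_kernel_damped[OF lap_int lap_pos \<sigma>(1) T y_cont], folded f_def]
  have bound: "norm (f k t) \<le> B * C" if "t \<in> {0..T}" for k t
    unfolding f_def real_norm_def abs_mult C_def using B[OF that] damped(2)[OF that] abs_ge_zero order_trans
    by (intro mult_mono) blast+
  have limit: "(\<lambda>k. f k t) \<longlonglongrightarrow> y t * causal_conv N y t" if "t \<in> {0..T}" for t
    unfolding f_def using damped(1)[OF that] by (intro tendsto_intros)
  show ?thesis using integral_nonneg_limit(2)[OF positive(1) integrable_const_ivl bound limit positive(2)] .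
qed

lemma integral_reflect_eq_causal_conv:
  "integral {0..t} (\<lambda>s. N (t - s) * y s) = causal_conv N y t"
proof -
  have "integral {0..t} (\<lambda>s. N (t - s) * y s) = integral {t - t..t} (\<lambda>x. N x * y (t - x))"
    using integral_reflect_shift_real[of t "\<lambda>x. N x * y (t - x)" t] by simp
  also have "\<dots> = causal_conv N y t" unfolding causal_conv_def
    by (rule integral_spike_set) (auto intro: negligible_subset[of "{0}"])
  finally show ?thesis .
qed

lemma square_has_integral:
  fixes y :: "real \<Rightarrow> real"
  assumes "continuous_on {0..T} y" "T \<ge> 0"
    and "\<And>t. t \<in> {0<..<T} \<Longrightarrow> (y has_real_derivative y' t) (at t)"
  shows "((\<lambda>t. 2 * y t * y' t) has_integral (y T ^ 2 - y 0 ^ 2)) {0..T}"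
proof (rule fundamental_theorem_of_calculus_interior)
  show "((\<lambda>t. y t ^ 2) has_vector_derivative 2 * y t * y' t) (at t)" if "t \<in> {0<..<T}" for t
    using DERIV_power[OF assms(3)[OF that], of 2]
    by (simp add: has_real_derivative_iff_has_vector_derivative algebra_simps)
qed (use assms in \<open>auto intro!: continuous_intros\<close>)

theorem mainTheorem2:
  fixes N :: "real \<Rightarrow> real"
  assumes loc_int: "\<And>T. T > 0 \<Longrightarrow> N absolutely_integrable_on {0<..<T}"
    and lap_def: "\<And>z. Re z > 0 \<Longrightarrow>
        (\<lambda>t. exp (- z * complex_of_real t) * complex_of_real (N t)) absolutely_integrable_on {0<..}"
    and lap_holo: "laplace N holomorphic_on {z. Re z > 0}"
    and lap_pos: "\<And>z. Re z > 0 \<Longrightarrow> Re (laplace N z) > 0"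
  shows "\<forall>(n::nat) (y::real \<Rightarrow> real).
           continuous_on {0..} y \<and> y 0 = 1 \<and>
           (\<forall>t>0. (y has_real_derivative
                     (- (real n ^ 2) * integral {0..t} (\<lambda>s. N (t - s) * y s))) (at t))
           \<longrightarrow> (\<forall>t>0. \<bar>y t\<bar> \<le> 1)"
proof (intro allI impI)
  fix n :: nat and y :: "real \<Rightarrow> real" and T :: real
  assume ode: "continuous_on {0..} y \<and> y 0 = 1 \<and>
    (\<forall>t>0. (y has_real_derivative (- (real n ^ 2) * integral {0..t} (\<lambda>s. N (t - s) * y s))) (at t))"
    and T: "T > 0"
  have y_cont: "continuous_on {0..T} y" using ode by (auto intro: continuous_on_subset)
  have "((\<lambda>t. 2 * y t * (- (real n ^ 2) * causal_conv N y t)) has_integral (y T ^ 2 - y 0 ^ 2)) {0..T}"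
    using ode T by (intro square_has_integral y_cont) (auto simp: integral_reflect_eq_causal_conv)
  then have energy: "((\<lambda>t. (- 2 * real n ^ 2) * (y t * causal_conv N y t)) has_integral (y T ^ 2 - 1)) {0..T}"
    using ode by (simp add: algebra_simps)
  have identity: "y T ^ 2 - 1 = - (2 * real n ^ 2) * integral {0..T} (\<lambda>t. y t * causal_conv N y t)"
    using integral_unique[OF energy] by simp
  have "N absolutely_integrable_on {0<..T}"
    by (rule set_integrable_subset[OF loc_int[of "T + 1"]]) (use T in auto)
  then have "integral {0..T} (\<lambda>t. y t * causal_conv N y t) \<ge> 0"
    by (rule causal_form_nonneg_laplace[OF _ lap_def lap_pos T y_cont])
  then have "y T ^ 2 - 1 \<le> 0" unfolding identity by simp
  then have "y T ^ 2 \<le> 1" by simp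
  then show "\<bar>y T\<bar> \<le> 1" by (simp add: abs_square_le_1)
qed

end
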